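(* For every countable group $G$ there is a proper left-invariant metric $d_G$ on $G$ such that $\operatorname{asdim}_{AN}(G,d_G)=\operatorname{asdim}(G)$.
   Context: For a countable group $G$, $\operatorname{asdim}(G)$ denotes $\operatorname{asdim}(G,d)$ for any proper left-invariant metric $d$ (it does not depend on the choice). A metric on $G$ is proper if bounded sets are finite, left-invariant if $d(gx,gy)=d(x,y)$. For a metric space $X$: $\operatorname{asdim}(X)\le n$ iff for every $r>0$ there are $D<\infty$ and families $\mathcal U_1,\dots,\mathcal U_{n+1}$ of subsets covering $X$, each $r$-disjoint (points in different members of the same family at distance $\ge r$), with members of diameter $\le D$; $\operatorname{asdim}_{AN}(X)\le n$ iff there are $b,c\ge0$ such that this holds with $D=cr+b$ for all $r>0$. *)

theory Defs
  imports "HOL-Algebra.Group" "HOL-Library.Extended_Nat" "HOL-Library.Countable_Set"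
begin

definition metric_on :: "'a set \<Rightarrow> ('a \<Rightarrow> 'a \<Rightarrow> real) \<Rightarrow> bool" where
  "metric_on X d \<longleftrightarrow>
     (\<forall>x\<in>X. \<forall>y\<in>X. 0 \<le> d x y \<and> (d x y = 0 \<longleftrightarrow> x = y) \<and> d x y = d y x) \<and>
     (\<forall>x\<in>X. \<forall>y\<in>X. \<forall>z\<in>X. d x z \<le> d x y + d y z)"

definition proper_metric_on :: "'a set \<Rightarrow> ('a \<Rightarrow> 'a \<Rightarrow> real) \<Rightarrow> bool" where
  "proper_metric_on X d \<longleftrightarrow> metric_on X d \<and>
     (\<forall>S\<subseteq>X. (\<exists>R. \<forall>x\<in>S. \<forall>y\<in>S. d x y \<le> R) \<longrightarrow> finite S)"

definition left_invariant :: "('a, 'b) monoid_scheme \<Rightarrow> ('a \<Rightarrow> 'a \<Rightarrow> real) \<Rightarrow> bool" where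
  "left_invariant G d \<longleftrightarrow>
     (\<forall>g\<in>carrier G. \<forall>x\<in>carrier G. \<forall>y\<in>carrier G. d (g \<otimes>\<^bsub>G\<^esub> x) (g \<otimes>\<^bsub>G\<^esub> y) = d x y)"

definition proper_li_metric :: "('a, 'b) monoid_scheme \<Rightarrow> ('a \<Rightarrow> 'a \<Rightarrow> real) \<Rightarrow> bool" where
  "proper_li_metric G d \<longleftrightarrow> proper_metric_on (carrier G) d \<and> left_invariant G d"

text \<open>U_1,...,U_{n+1} (indexed 0..n) cover X, each family r-disjoint, members of diameter <= D.\<close>
definition good_cover :: "'a set \<Rightarrow> ('a \<Rightarrow> 'a \<Rightarrow> real) \<Rightarrow> nat \<Rightarrow> real \<Rightarrow> real \<Rightarrow> (nat \<Rightarrow> 'a set set) \<Rightarrow> bool" where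
  "good_cover X d n r D U \<longleftrightarrow>
     (\<Union>i\<le>n. \<Union>(U i)) = X \<and>
     (\<forall>i\<le>n. \<forall>A\<in>U i. A \<subseteq> X \<and> (\<forall>x\<in>A. \<forall>y\<in>A. d x y \<le> D)) \<and>
     (\<forall>i\<le>n. \<forall>A\<in>U i. \<forall>B\<in>U i. A \<noteq> B \<longrightarrow> (\<forall>x\<in>A. \<forall>y\<in>B. r \<le> d x y))"

definition asdim_le :: "'a set \<Rightarrow> ('a \<Rightarrow> 'a \<Rightarrow> real) \<Rightarrow> nat \<Rightarrow> bool" where
  "asdim_le X d n \<longleftrightarrow> (\<forall>r>0. \<exists>D. \<exists>U. good_cover X d n r D U)"

definition asdimAN_le :: "'a set \<Rightarrow> ('a \<Rightarrow> 'a \<Rightarrow> real) \<Rightarrow> nat \<Rightarrow> bool" where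
  "asdimAN_le X d n \<longleftrightarrow>
     (\<exists>b c. 0 \<le> b \<and> 0 \<le> c \<and> (\<forall>r>0. \<exists>U. good_cover X d n r (c * r + b) U))"

text \<open>Dimensions as extended naturals (infinity if no finite n works).\<close>
definition asdim :: "'a set \<Rightarrow> ('a \<Rightarrow> 'a \<Rightarrow> real) \<Rightarrow> enat" where
  "asdim X d = Inf {enat n | n. asdim_le X d n}"

definition asdimAN :: "'a set \<Rightarrow> ('a \<Rightarrow> 'a \<Rightarrow> real) \<Rightarrow> enat" where
  "asdimAN X d = Inf {enat n | n. asdimAN_le X d n}"

text \<open>asdim of a countable group: asdim(G,d) for any proper left-invariant metric d
  (independent of the choice); we pick one by Hilbert choice.\<close>
definition asdim_group :: "('a, 'b) monoid_scheme \<Rightarrow> enat" where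
  "asdim_group G = asdim (carrier G) (SOME d. proper_li_metric G d)"

end

theory Submission
  imports Defs "HOL-Algebra.Divisibility"
begin

text \<open>
  Weighted word length, with weights whose sublevel sets are finite (possible because G is
  countable), gives a proper left-invariant metric d; if asdim(G, d) is infinite, d itself
  works. If asdim(G, d) = n, let D(r) bound the diameters of n+1 r-disjoint families covering G,
  choose scales T 0 = 1, T (j+1) = max (2 T j) (D (T j + 1)), and rescale d by
  \<phi>(t) = 1 + #{j. T j < t} for t > 0. As the scales at least double, \<phi> is subadditive,
  so \<phi> \<circ> d is again a proper left-invariant metric, coarsely equivalent to d. A cover for d
  at scale T j + 1 is, for \<phi> \<circ> d, (j+2)-disjoint with diameters at most j+2: the
  control function of \<phi> \<circ> d is linear.
\<close>

section \<open>Proper left-invariant metrics on countable groups\<close>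

lemma (in group) metric_on_of_length:
  fixes l :: "'a \<Rightarrow> real"
  assumes eq_0_iff: "\<And>g. g \<in> carrier G \<Longrightarrow> l g = 0 \<longleftrightarrow> g = \<one>"
    and inv: "\<And>g. g \<in> carrier G \<Longrightarrow> l (inv g) = l g"
    and mult: "\<And>g h. g \<in> carrier G \<Longrightarrow> h \<in> carrier G \<Longrightarrow> l (g \<otimes> h) \<le> l g + l h"
  shows "metric_on (carrier G) (\<lambda>x y. l (inv x \<otimes> y))"
  unfolding metric_on_def
proof (intro conjI ballI)
  fix x y z assume x: "x \<in> carrier G" and y: "y \<in> carrier G" and z: "z \<in> carrier G"
  have "l \<one> \<le> 2 * l (inv x \<otimes> y)"
    using mult[of "inv x \<otimes> y" "inv (inv x \<otimes> y)"] inv[of "inv x \<otimes> y"] x y by simp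
  then show "0 \<le> l (inv x \<otimes> y)" using eq_0_iff[of \<one>] by simp
  have "inv x \<otimes> y = \<one> \<longleftrightarrow> x = y"
    using x y by (metis inv_closed inv_equality inv_inv l_inv)
  then show "l (inv x \<otimes> y) = 0 \<longleftrightarrow> x = y"
    using x y eq_0_iff[of "inv x \<otimes> y"] by simp
  show "l (inv x \<otimes> y) = l (inv y \<otimes> x)"
    using x y inv[of "inv x \<otimes> y"] by (simp add: inv_mult_group)
  have "inv x \<otimes> z = (inv x \<otimes> y) \<otimes> (inv y \<otimes> z)"
    using x y z by (simp add: m_assoc[symmetric]) (simp add: m_assoc)
  then show "l (inv x \<otimes> z) \<le> l (inv x \<otimes> y) + l (inv y \<otimes> z)"
    using x y z mult[of "inv x \<otimes> y" "inv y \<otimes> z"] by simp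
qed

lemma (in group) proper_li_metric_of_length:
  fixes l :: "'a \<Rightarrow> real"
  assumes "\<And>g. g \<in> carrier G \<Longrightarrow> l g = 0 \<longleftrightarrow> g = \<one>"
    and "\<And>g. g \<in> carrier G \<Longrightarrow> l (inv g) = l g"
    and "\<And>g h. g \<in> carrier G \<Longrightarrow> h \<in> carrier G \<Longrightarrow> l (g \<otimes> h) \<le> l g + l h"
    and finite_le: "\<And>R. finite {g \<in> carrier G. l g \<le> R}"
  shows "proper_li_metric G (\<lambda>x y. l (inv x \<otimes> y))"
proof -
  have "finite S"
    if S: "S \<subseteq> carrier G" and R: "\<forall>x\<in>S. \<forall>y\<in>S. l (inv x \<otimes> y) \<le> R" for S R
  proof (cases "S = {}")
    case False
    then obtain x where x: "x \<in> S" by blast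
    have "S \<subseteq> (\<otimes>) x ` {g \<in> carrier G. l g \<le> R}"
    proof
      fix y assume y: "y \<in> S"
      then have "y = x \<otimes> (inv x \<otimes> y)"
        using x S by (simp add: m_assoc[symmetric] subset_iff)
      then show "y \<in> (\<otimes>) x ` {g \<in> carrier G. l g \<le> R}"
        using x y S R by blast
    qed
    then show ?thesis using finite_le finite_subset by blast
  qed simp
  moreover have "left_invariant G (\<lambda>x y. l (inv x \<otimes> y))"
    unfolding left_invariant_def by (auto simp: inv_mult_group m_assoc[symmetric]) (simp add: m_assoc)
  ultimately show ?thesis
    using metric_on_of_length assms unfolding proper_li_metric_def proper_metric_on_def by blast
qed

locale weighted_group = group +
  fixes w :: "'a \<Rightarrow> nat"
  assumes weight_pos: "s \<in> carrier G \<Longrightarrow> 0 < w s"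
    and weight_inv: "s \<in> carrier G \<Longrightarrow> w (inv s) = w s"
    and finite_weight_le: "finite {s \<in> carrier G. w s \<le> k}"
begin

definition word_length :: "'a \<Rightarrow> nat" where
  "word_length g =
     (LEAST k. \<exists>xs. set xs \<subseteq> carrier G \<and> foldr (\<otimes>) xs \<one> = g \<and> sum_list (map w xs) = k)"

text \<open>Not a simp rule: for a = \<one> it rewrites forever, so it is only used instantiated.\<close>
lemma foldr_mult_eq:
  "set xs \<subseteq> carrier G \<Longrightarrow> a \<in> carrier G \<Longrightarrow> foldr (\<otimes>) xs a = foldr (\<otimes>) xs \<one> \<otimes> a"
  by (induction xs) (auto simp: m_assoc)

lemma foldr_mult_rev_inv:
  "set xs \<subseteq> carrier G \<Longrightarrow> foldr (\<otimes>) (rev (map (m_inv G) xs)) \<one> = inv (foldr (\<otimes>) xs \<one>)"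
proof (induction xs)
  case (Cons a xs)
  then have "set (rev (map (m_inv G) xs)) \<subseteq> carrier G" by auto
  with Cons show ?case by (simp add: foldr_mult_eq[of _ "inv a"] inv_mult_group)
qed simp

lemma length_le_sum_weights: "set xs \<subseteq> carrier G \<Longrightarrow> length xs \<le> sum_list (map w xs)"
  by (induction xs) (auto dest!: weight_pos)

lemma word_length_attained:
  assumes "g \<in> carrier G"
  obtains xs where "set xs \<subseteq> carrier G" "foldr (\<otimes>) xs \<one> = g" "sum_list (map w xs) = word_length g"
proof -
  have "\<exists>xs. set xs \<subseteq> carrier G \<and> foldr (\<otimes>) xs \<one> = g \<and> sum_list (map w xs) = word_length g"
    unfolding word_length_def
    by (rule LeastI_ex) (use assms in \<open>auto intro!: exI[of _ "[g]"]\<close>)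
  then show thesis using that by blast
qed

lemma word_length_le: "set xs \<subseteq> carrier G \<Longrightarrow> word_length (foldr (\<otimes>) xs \<one>) \<le> sum_list (map w xs)"
  unfolding word_length_def by (rule Least_le) blast

lemma word_length_eq_0_iff: "g \<in> carrier G \<Longrightarrow> word_length g = 0 \<longleftrightarrow> g = \<one>"
proof
  assume "g \<in> carrier G" "word_length g = 0"
  then obtain xs where "set xs \<subseteq> carrier G" "foldr (\<otimes>) xs \<one> = g" "sum_list (map w xs) = 0"
    by (auto elim: word_length_attained)
  moreover from this have "xs = []" by (cases xs) (auto dest: weight_pos)
  ultimately show "g = \<one>" by simp
next
  assume "g = \<one>"
  then show "word_length g = 0" using word_length_le[of "[]"] by simp
qed

lemma word_length_mult:
  assumes "g \<in> carrier G" "h \<in> carrier G"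
  shows "word_length (g \<otimes> h) \<le> word_length g + word_length h"
proof -
  obtain xs where "set xs \<subseteq> carrier G" "foldr (\<otimes>) xs \<one> = g" "sum_list (map w xs) = word_length g"
    using assms(1) by (rule word_length_attained)
  moreover obtain ys where "set ys \<subseteq> carrier G" "foldr (\<otimes>) ys \<one> = h" "sum_list (map w ys) = word_length h"
    using assms(2) by (rule word_length_attained)
  ultimately show ?thesis using assms word_length_le[of "xs @ ys"] foldr_mult_eq[of xs h] by simp
qed

lemma word_length_inv_le: "g \<in> carrier G \<Longrightarrow> word_length (inv g) \<le> word_length g"
proof -
  assume "g \<in> carrier G"
  then obtain xs where xs: "set xs \<subseteq> carrier G" "foldr (\<otimes>) xs \<one> = g" "sum_list (map w xs) = word_length g"
    by (rule word_length_attained)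
  moreover have "sum_list (map w (rev (map (m_inv G) xs))) = sum_list (map w xs)"
    using xs(1) by (induction xs) (auto simp: weight_inv)
  ultimately show ?thesis
    using word_length_le[of "rev (map (m_inv G) xs)"] by (auto simp: foldr_mult_rev_inv)
qed

lemma word_length_inv: "g \<in> carrier G \<Longrightarrow> word_length (inv g) = word_length g"
  using word_length_inv_le[of g] word_length_inv_le[of "inv g"] by simp

lemma finite_word_length_le: "finite {g \<in> carrier G. word_length g \<le> k}"
proof -
  let ?S = "{s \<in> carrier G. w s \<le> k}"
  have "{g \<in> carrier G. word_length g \<le> k} \<subseteq> (\<lambda>xs. foldr (\<otimes>) xs \<one>) ` {xs. set xs \<subseteq> ?S \<and> length xs \<le> k}"
  proof
    fix g assume g: "g \<in> {g \<in> carrier G. word_length g \<le> k}"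
    then obtain xs where xs: "set xs \<subseteq> carrier G" "foldr (\<otimes>) xs \<one> = g" "sum_list (map w xs) = word_length g"
      by (blast elim: word_length_attained)
    have "w s \<le> k" if "s \<in> set xs" for s
      using that member_le_sum_list[of "w s" "map w xs"] xs(3) g by simp
    moreover have "length xs \<le> k"
      using length_le_sum_weights[OF xs(1)] xs(3) g by simp
    ultimately show "g \<in> (\<lambda>xs. foldr (\<otimes>) xs \<one>) ` {xs. set xs \<subseteq> ?S \<and> length xs \<le> k}"
      using xs(1,2) by blast
  qed
  then show ?thesis
    by (rule finite_subset) (intro finite_imageI finite_lists_length_le finite_weight_le)
qed

lemma proper_li_metric_word_length: "proper_li_metric G (\<lambda>x y. real (word_length (inv x \<otimes> y)))"
proof (rule proper_li_metric_of_length)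
  fix R :: real
  have "{g \<in> carrier G. real (word_length g) \<le> R} \<subseteq> {g \<in> carrier G. word_length g \<le> nat \<lfloor>R\<rfloor>}"
    by auto linarith
  then show "finite {g \<in> carrier G. real (word_length g) \<le> R}"
    by (rule finite_subset) (rule finite_word_length_le)
qed (simp_all add: word_length_eq_0_iff word_length_inv word_length_mult flip: of_nat_add)

end

lemma (in group) weighted_group_to_nat_on:
  assumes "countable (carrier G)"
  shows "weighted_group G (\<lambda>s. to_nat_on (carrier G) s + to_nat_on (carrier G) (inv s) + 1)"
proof unfold_locales
  fix k
  let ?S = "{s \<in> carrier G. to_nat_on (carrier G) s + to_nat_on (carrier G) (inv s) + 1 \<le> k}"
  have "finite (to_nat_on (carrier G) ` ?S)"
    by (rule finite_subset[of _ "{..k}"]) auto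
  moreover have "inj_on (to_nat_on (carrier G)) ?S"
    using inj_on_to_nat_on[OF assms] by (rule inj_on_subset) auto
  ultimately show "finite ?S"
    by (rule finite_imageD)
qed simp_all

lemma (in group) exists_proper_li_metric: "countable (carrier G) \<Longrightarrow> \<exists>d. proper_li_metric G d"
  using weighted_group.proper_li_metric_word_length[OF weighted_group_to_nat_on] by blast

section \<open>Comparing metrics and their asymptotic dimensions\<close>

lemma metric_on_compose:
  fixes f :: "real \<Rightarrow> real"
  assumes d: "metric_on X d" and "mono f"
    and eq_0_iff: "\<And>t. 0 \<le> t \<Longrightarrow> f t = 0 \<longleftrightarrow> t = 0"
    and add_le: "\<And>s t. 0 \<le> s \<Longrightarrow> 0 \<le> t \<Longrightarrow> f (s + t) \<le> f s + f t"
  shows "metric_on X (\<lambda>x y. f (d x y))"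
  unfolding metric_on_def
proof (intro conjI ballI)
  fix x y z assume x: "x \<in> X" and y: "y \<in> X" and z: "z \<in> X"
  have d_xy: "0 \<le> d x y" "d x y = 0 \<longleftrightarrow> x = y" "d x y = d y x"
    using d x y by (auto simp: metric_on_def)
  show "0 \<le> f (d x y)"
    using monoD[OF \<open>mono f\<close> d_xy(1)] eq_0_iff[of 0] by simp
  show "f (d x y) = 0 \<longleftrightarrow> x = y" using d_xy eq_0_iff by simp
  show "f (d x y) = f (d y x)" using d_xy by simp
  have "d x z \<le> d x y + d y z" "0 \<le> d y z"
    using d x y z by (auto simp: metric_on_def)
  have "f (d x z) \<le> f (d x y + d y z)" using \<open>d x z \<le> d x y + d y z\<close> by (rule monoD[OF \<open>mono f\<close>])
  also have "\<dots> \<le> f (d x y) + f (d y z)" using d_xy(1) \<open>0 \<le> d y z\<close> by (rule add_le)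
  finally show "f (d x z) \<le> f (d x y) + f (d y z)" .
qed

lemma proper_metric_on_compose:
  fixes f :: "real \<Rightarrow> real"
  assumes d: "proper_metric_on X d" and f: "mono f"
    "\<And>t. 0 \<le> t \<Longrightarrow> f t = 0 \<longleftrightarrow> t = 0"
    "\<And>s t. 0 \<le> s \<Longrightarrow> 0 \<le> t \<Longrightarrow> f (s + t) \<le> f s + f t"
    and sublevel_bounded: "\<And>R. \<exists>T. \<forall>t. f t \<le> R \<longrightarrow> t \<le> T"
  shows "proper_metric_on X (\<lambda>x y. f (d x y))"
proof -
  have "finite S" if "S \<subseteq> X" "\<forall>x\<in>S. \<forall>y\<in>S. f (d x y) \<le> R" for S R
  proof -
    obtain T where "\<forall>t. f t \<le> R \<longrightarrow> t \<le> T" using sublevel_bounded by blast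
    then have "\<forall>x\<in>S. \<forall>y\<in>S. d x y \<le> T" using that(2) by blast
    then show ?thesis using d that(1) unfolding proper_metric_on_def by blast
  qed
  moreover have "metric_on X (\<lambda>x y. f (d x y))"
    using d by (intro metric_on_compose[OF _ f]) (simp add: proper_metric_on_def)
  ultimately show ?thesis
    unfolding proper_metric_on_def by blast
qed

lemma good_cover_compare:
  assumes "good_cover X d n r D U"
    and "\<And>x y. x \<in> X \<Longrightarrow> y \<in> X \<Longrightarrow> d x y \<le> D \<Longrightarrow> d' x y \<le> D'"
    and "\<And>x y. x \<in> X \<Longrightarrow> y \<in> X \<Longrightarrow> r \<le> d x y \<Longrightarrow> r' \<le> d' x y"
  shows "good_cover X d' n r' D' U"
  using assms unfolding good_cover_def by (meson subsetD)

lemma asdim_le_of_compose: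
  fixes f :: "real \<Rightarrow> real"
  assumes cover: "asdim_le X (\<lambda>x y. f (d x y)) n" and "mono f"
    and sublevel_bounded: "\<And>R. \<exists>T. \<forall>t. f t \<le> R \<longrightarrow> t \<le> T"
  shows "asdim_le X d n"
  unfolding asdim_le_def
proof (intro allI impI)
  fix r :: real assume "0 < r"
  define r' where "r' = max 1 (f r + 1)"
  obtain D' U where U: "good_cover X (\<lambda>x y. f (d x y)) n r' D' U"
    using cover by (force simp: asdim_le_def r'_def)
  obtain T where T: "\<forall>t. f t \<le> D' \<longrightarrow> t \<le> T" using sublevel_bounded by blast
  have "good_cover X d n r T U"
  proof (rule good_cover_compare[OF U])
    fix x y assume "r' \<le> f (d x y)"
    then show "r \<le> d x y"
      using monoD[OF \<open>mono f\<close>, of "d x y" r] by (force simp: r'_def)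
  qed (use T in blast)
  then show "\<exists>D U. good_cover X d n r D U" by blast
qed

lemma asdimAN_le_imp_asdim_le: "asdimAN_le X d n \<Longrightarrow> asdim_le X d n"
  unfolding asdimAN_le_def asdim_le_def by blast

lemma asdim_le_asdimAN:
  assumes "\<And>m. asdimAN_le X d' m \<Longrightarrow> asdim_le X d m"
  shows "asdim X d \<le> asdimAN X d'"
  unfolding asdim_def asdimAN_def using assms by (blast intro: Inf_superset_mono)

lemma asdim_eq_enatD:
  assumes "asdim X d = enat n"
  shows "asdim_le X d n"
proof -
  let ?A = "{enat m | m. asdim_le X d m}"
  have "?A \<noteq> {}"
  proof
    assume "?A = {}"
    then have "asdim X d = \<infinity>" by (simp add: asdim_def top_enat_def)
    with assms show False by simp
  qed
  then have "Inf ?A \<in> ?A" unfolding Inf_enat_def by (auto intro: LeastI)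
  then show ?thesis using assms by (auto simp: asdim_def)
qed

lemma asdimAN_le_enat: "asdimAN_le X d n \<Longrightarrow> asdimAN X d \<le> enat n"
  unfolding asdimAN_def by (blast intro: Inf_lower)

section \<open>Rescaling along a doubling sequence of scales\<close>

primrec scale_seq :: "(real \<Rightarrow> real) \<Rightarrow> nat \<Rightarrow> real" where
  "scale_seq D 0 = 1"
| "scale_seq D (Suc j) = max (2 * scale_seq D j) (D (scale_seq D j + 1))"

definition scales_below :: "(real \<Rightarrow> real) \<Rightarrow> real \<Rightarrow> nat set" where
  "scales_below D t = {j. scale_seq D j < t}"

definition rescale :: "(real \<Rightarrow> real) \<Rightarrow> real \<Rightarrow> real" where
  "rescale D t = (if t \<le> 0 then 0 else 1 + real (card (scales_below D t)))"

lemma scale_seq_ge: "real j + 1 \<le> scale_seq D j"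
  by (induction j) auto

lemma incseq_scale_seq: "incseq (scale_seq D)"
proof (rule incseq_SucI)
  fix j
  show "scale_seq D j \<le> scale_seq D (Suc j)" using scale_seq_ge[of j D] by simp
qed

lemma finite_scales_below: "finite (scales_below D t)"
proof (rule finite_subset)
  show "scales_below D t \<subseteq> {..nat \<lceil>t\<rceil>}"
  proof
    fix j assume "j \<in> scales_below D t"
    then have "real j + 1 < t" using scale_seq_ge[of j D] by (simp add: scales_below_def)
    then show "j \<in> {..nat \<lceil>t\<rceil>}" by simp linarith
  qed
qed simp

lemma scales_below_mono: "s \<le> t \<Longrightarrow> scales_below D s \<subseteq> scales_below D t"
  by (auto simp: scales_below_def)

lemma atMost_subset_scales_below: "scale_seq D j < t \<Longrightarrow> {..j} \<subseteq> scales_below D t"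
  using incseq_scale_seq[of D] by (force simp: scales_below_def incseq_def)

lemma scales_below_subset_atMost: "t \<le> scale_seq D (Suc j) \<Longrightarrow> scales_below D t \<subseteq> {..j}"
  using incseq_scale_seq[of D] by (force simp: scales_below_def incseq_def not_less_eq_eq)

lemma scales_below_double: "scales_below D (2 * t) \<subseteq> insert 0 (Suc ` scales_below D t)"
proof
  fix k assume k: "k \<in> scales_below D (2 * t)"
  show "k \<in> insert 0 (Suc ` scales_below D t)"
  proof (cases k)
    case (Suc j)
    then show ?thesis using k by (auto simp: scales_below_def)
  qed simp
qed

lemma mono_rescale: "mono (rescale D)"
  by (rule monoI) (auto simp: rescale_def intro!: card_mono finite_scales_below scales_below_mono)

lemma rescale_eq_0_iff: "0 \<le> t \<Longrightarrow> rescale D t = 0 \<longleftrightarrow> t = 0"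
  by (simp add: rescale_def)

lemma rescale_add_le:
  assumes "0 \<le> s" "0 \<le> t"
  shows "rescale D (s + t) \<le> rescale D s + rescale D t"
proof (cases "s = 0 \<or> t = 0")
  case False
  define m where "m = max s t"
  have "card (scales_below D (s + t)) \<le> card (scales_below D (2 * m))"
    by (intro card_mono finite_scales_below scales_below_mono) (simp add: m_def)
  also have "\<dots> \<le> card (insert 0 (Suc ` scales_below D m))"
    by (intro card_mono scales_below_double) (simp add: finite_scales_below)
  also have "\<dots> \<le> card (scales_below D m) + 1"
    by (simp add: card_insert_if card_image finite_scales_below)
  finally have "rescale D (s + t) \<le> rescale D m + 1"
    using False assms by (simp add: rescale_def m_def)
  moreover have "rescale D m + 1 \<le> rescale D s + rescale D t"
    using False assms by (auto simp: m_def max_def rescale_def)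
  ultimately show ?thesis by linarith
qed (use assms in \<open>auto simp: rescale_def\<close>)

lemma rescale_ge: "scale_seq D j < t \<Longrightarrow> real j + 2 \<le> rescale D t"
  using card_mono[OF finite_scales_below atMost_subset_scales_below, of D j t] scale_seq_ge[of j D]
  by (simp add: rescale_def)

lemma rescale_le: "t \<le> scale_seq D (Suc j) \<Longrightarrow> rescale D t \<le> real j + 2"
  using card_mono[OF _ scales_below_subset_atMost, of j t D] by (simp add: rescale_def)

lemma le_scale_seq_if_rescale_le: "rescale D t \<le> R \<Longrightarrow> t \<le> scale_seq D (nat \<lceil>R\<rceil>)"
  using rescale_ge[of D "nat \<lceil>R\<rceil>" t] by linarith

lemma proper_li_metric_rescale:
  assumes "proper_li_metric G d"
  shows "proper_li_metric G (\<lambda>x y. rescale D (d x y))"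
proof -
  have "proper_metric_on (carrier G) (\<lambda>x y. rescale D (d x y))"
  proof (rule proper_metric_on_compose[OF _ mono_rescale rescale_eq_0_iff rescale_add_le])
    show "proper_metric_on (carrier G) d" using assms by (simp add: proper_li_metric_def)
    show "\<exists>T. \<forall>t. rescale D t \<le> R \<longrightarrow> t \<le> T" for R
      using le_scale_seq_if_rescale_le by blast
  qed
  then show ?thesis using assms by (simp add: proper_li_metric_def left_invariant_def)
qed

lemma asdim_le_of_rescale:
  assumes "asdim_le X (\<lambda>x y. rescale D (d x y)) n"
  shows "asdim_le X d n"
  by (rule asdim_le_of_compose[OF assms mono_rescale]) (use le_scale_seq_if_rescale_le in blast)

lemma asdimAN_le_rescale:
  assumes cover: "\<And>r. 0 < r \<Longrightarrow> \<exists>U. good_cover X d n r (D r) U"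
  shows "asdimAN_le X (\<lambda>x y. rescale D (d x y)) n"
  unfolding asdimAN_le_def
proof (rule exI[of _ 3], rule exI[of _ 1], intro conjI allI impI)
  fix r' :: real assume "0 < r'"
  define j where "j = nat \<lceil>r'\<rceil>"
  have j: "r' \<le> real j" "real j \<le> r' + 1" unfolding j_def using \<open>0 < r'\<close> by linarith+
  define r where "r = scale_seq D j + 1"
  have "0 < r" using scale_seq_ge[of j D] by (simp add: r_def)
  then obtain U where U: "good_cover X d n r (D r) U" using cover by blast
  have "good_cover X (\<lambda>x y. rescale D (d x y)) n r' (1 * r' + 3) U"
  proof (rule good_cover_compare[OF U])
    fix x y assume "d x y \<le> D r"
    then have "rescale D (d x y) \<le> real j + 2" by (intro rescale_le) (simp add: r_def)
    then show "rescale D (d x y) \<le> 1 * r' + 3" using j by linarith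
  next
    fix x y assume "r \<le> d x y"
    then have "real j + 2 \<le> rescale D (d x y)" by (intro rescale_ge) (simp add: r_def)
    then show "r' \<le> rescale D (d x y)" using j by linarith
  qed
  then show "\<exists>U. good_cover X (\<lambda>x y. rescale D (d x y)) n r' (1 * r' + 3) U" by blast
qed simp_all

lemma asdimAN_le_rescale_obtain:
  assumes "asdim_le X d n"
  obtains D where "asdimAN_le X (\<lambda>x y. rescale D (d x y)) n"
proof -
  define D where "D r = (SOME D. \<exists>U. good_cover X d n r D U)" for r
  have "\<exists>U. good_cover X d n r (D r) U" if "0 < r" for r
  proof -
    have "\<exists>D U. good_cover X d n r D U" using assms that by (simp add: asdim_le_def)
    then show ?thesis unfolding D_def by (rule someI_ex)
  qed
  then show thesis using that asdimAN_le_rescale by blast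
qed

theorem mainTheorem18:
  fixes G :: "('a, 'b) monoid_scheme"
  assumes "group G" and "countable (carrier G)"
  shows "\<exists>dG. proper_li_metric G dG \<and> asdimAN (carrier G) dG = asdim_group G"
proof -
  define d where "d = (SOME d. proper_li_metric G d)"
  have d: "proper_li_metric G d"
    using group.exists_proper_li_metric[OF assms] unfolding d_def by (rule someI_ex)
  have asdim_group: "asdim_group G = asdim (carrier G) d"
    by (simp add: asdim_group_def d_def)
  show ?thesis
  proof (cases "asdim (carrier G) d")
    case (enat n)
    obtain D where D: "asdimAN_le (carrier G) (\<lambda>x y. rescale D (d x y)) n"
      using asdim_eq_enatD[OF enat] by (rule asdimAN_le_rescale_obtain)
    let ?dG = "\<lambda>x y. rescale D (d x y)"
    have "asdimAN (carrier G) ?dG \<le> asdim (carrier G) d"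
      using enat asdimAN_le_enat[OF D] by simp
    moreover have "asdim (carrier G) d \<le> asdimAN (carrier G) ?dG"
      by (rule asdim_le_asdimAN, rule asdim_le_of_rescale, erule asdimAN_le_imp_asdim_le)
    ultimately show ?thesis
      using proper_li_metric_rescale[OF d] asdim_group by (intro exI[of _ ?dG]) simp
  next
    case infinity
    moreover have "asdim (carrier G) d \<le> asdimAN (carrier G) d"
      by (rule asdim_le_asdimAN, erule asdimAN_le_imp_asdim_le)
    ultimately show ?thesis using d asdim_group by (intro exI[of _ d]) simp
  qed
qed

end
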